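(* Let $0<\mu<L$, $\kappa=L/\mu$, and let $m(z)=z^n+\sum_{i=0}^{n-1}m_iz^i\in\mathbb{R}[z]$ be monic of degree $n\ge1$ with all roots on the unit circle. Let $d(z)\in\mathbb{R}[z]$ with $\deg d<n$, and let $\rho\in(0,1)$ be such that for every $\lambda\in[\mu,L]$, all roots of $p_\lambda(z)=m(z)-\lambda d(z)$ lie in the closed disk $\{z:|z|\le\rho\}$. Then $$\rho\ \ge\ \rho_{\mathrm{TV}}:=\Bigl(\frac{\kappa-1}{\kappa+1}\Bigr)^{1/n}.$$ Equivalently, the worst-case convergence rate (over all symmetric $A$ with eigenvalues in $[\mu,L]$ and all $b$ with model $m$) of any minimal-order optimization filter $C(z)=\frac{d(z)}{m(z)}I_d$ that asymptotically tracks the minimizer is at least $\rho_{\mathrm{TV}}$.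
   Context: Setting: objective $f_k(x)=\tfrac12x^\top Ax+b_k^\top x$, iterates with $\mathcal{Z}$-transform $X(z)=C(z)(AX(z)+B(z))$, where $B(z)=B_N(z)/m(z)$ is the $\mathcal{Z}$-transform of $\{b_k\}$; convergence rate is $\limsup_k\|x_k-x_k^\star\|^{1/k}$ with $x_k^\star=-A^{-1}b_k$. For the filter $C(z)=\frac{d(z)}{m(z)}I_d$, the closed-loop poles are the roots of $m(z)-\lambda d(z)$ for $\lambda$ ranging over the eigenvalues of $A$. *)

theory Defs
  imports "HOL-Analysis.Analysis" "HOL-Computational_Algebra.Polynomial"
begin

definition croots :: "real poly \<Rightarrow> complex set" where
  "croots p = {z. poly (map_poly complex_of_real p) z = 0}"

end

theory Submission
  imports Defs "HOL-Computational_Algebra.Fundamental_Theorem_Algebra"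
begin

(*
  Vieta: the constant coefficient of a monic p of degree n is, up to sign, the product of its
  n complex roots. Hence |m(0)| = 1, while every m - lam d is monic of degree n with constant
  coefficient of modulus |m(0) - lam d(0)| <= rho^n. Evaluating at lam = mu and lam = L, the
  affine function lam |-> m(0) - lam d(0) must stay rho^n-close to 0 at both ends although it
  has modulus 1 at lam = 0; this forces (L - mu)/(L + mu) <= rho^n.
*)

lemma abs_coeff_0_eq_prod_roots:
  fixes p :: "real poly"
  assumes "lead_coeff p = 1"
  obtains root where "\<bar>coeff p 0\<bar> = (\<Prod>i<degree p. cmod (root i))"
    and "\<And>i. i < degree p \<Longrightarrow> root i \<in> croots p"
proof -
  define P where "P = map_poly complex_of_real p"
  have "lead_coeff P = 1" and deg: "degree P = degree p"
    using assms by (simp_all add: P_def degree_map_poly coeff_map_poly)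
  moreover obtain root where "smult (lead_coeff P) (\<Prod>i<degree P. [:-root i, 1:]) = P"
    using complex_poly_decompose' by blast
  ultimately have P_prod: "P = (\<Prod>i<degree p. [:-root i, 1:])"
    by simp
  have "\<bar>coeff p 0\<bar> = cmod (poly P 0)"
    by (simp add: P_def poly_0_coeff_0 coeff_map_poly)
  also have "\<dots> = cmod (\<Prod>i<degree p. - root i)"
    by (subst P_prod) (simp add: poly_prod)
  also have "\<dots> = (\<Prod>i<degree p. cmod (root i))"
    by (simp only: prod_norm[symmetric] norm_minus_cancel)
  finally have "\<bar>coeff p 0\<bar> = (\<Prod>i<degree p. cmod (root i))" .
  moreover have "root i \<in> croots p" if "i < degree p" for i
  proof -
    have "poly P (root i) = (\<Prod>j<degree p. poly [:-root j, 1:] (root i))"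
      by (subst P_prod) (simp add: poly_prod)
    also have "\<dots> = 0"
      using that by (intro prod_zero) auto
    finally show ?thesis
      by (simp add: croots_def P_def)
  qed
  ultimately show ?thesis
    using that by blast
qed

lemma abs_coeff_0_le_power_degree:
  fixes p :: "real poly"
  assumes "lead_coeff p = 1" and "\<forall>z \<in> croots p. cmod z \<le> r"
  shows "\<bar>coeff p 0\<bar> \<le> r ^ degree p"
proof -
  obtain root where "\<bar>coeff p 0\<bar> = (\<Prod>i<degree p. cmod (root i))"
    and "\<And>i. i < degree p \<Longrightarrow> root i \<in> croots p"
    using abs_coeff_0_eq_prod_roots[OF assms(1)] by blast
  with assms(2) show ?thesis
    using prod_mono[of "{..<degree p}" "\<lambda>i. cmod (root i)" "\<lambda>_. r"] by simp
qed

lemma abs_coeff_0_eq_1_if_roots_on_unit_circle: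
  fixes p :: "real poly"
  assumes "lead_coeff p = 1" and "\<forall>z \<in> croots p. cmod z = 1"
  shows "\<bar>coeff p 0\<bar> = 1"
proof -
  obtain root where "\<bar>coeff p 0\<bar> = (\<Prod>i<degree p. cmod (root i))"
    and "\<And>i. i < degree p \<Longrightarrow> root i \<in> croots p"
    using abs_coeff_0_eq_prod_roots[OF assms(1)] by blast
  with assms(2) show ?thesis
    by simp
qed

lemma monic_minus_smult_lower_degree:
  fixes m d :: "'a::field poly"
  assumes "lead_coeff m = 1" and "degree d < degree m"
  shows "degree (m - smult c d) = degree m" and "lead_coeff (m - smult c d) = 1"
proof -
  have "degree (smult c d) < degree m"
    using assms(2) by (meson degree_smult_le le_less_trans)
  then show deg: "degree (m - smult c d) = degree m"
    using degree_add_eq_left[of "- smult c d" m] by simp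
  have "coeff d (degree m) = 0"
    using assms(2) by (simp add: coeff_eq_0)
  with assms(1) show "lead_coeff (m - smult c d) = 1"
    by (simp add: deg)
qed

(* Multiplying by a = +-1 reduces to a = 1; then L (1 - mu b) + mu (L b - 1) = L - mu. *)
lemma affine_unit_at_zero_bound:
  fixes a b t \<mu> L :: real
  assumes "\<bar>a\<bar> = 1" and "0 < \<mu>" and "\<mu> < L"
    and "\<bar>a - \<mu> * b\<bar> \<le> t" and "\<bar>a - L * b\<bar> \<le> t"
  shows "(L - \<mu>) / (L + \<mu>) \<le> t"
proof -
  have "\<bar>a - c * b\<bar> = \<bar>1 - c * (a * b)\<bar>" for c
  proof -
    have "\<bar>a - c * b\<bar> = \<bar>a\<bar> * \<bar>a - c * b\<bar>"
      using assms(1) by simp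
    also have "\<dots> = \<bar>a * a - c * (a * b)\<bar>"
      by (simp add: abs_mult [symmetric] algebra_simps)
    also have "a * a = 1"
      using assms(1) by (metis abs_mult_self_eq mult_1)
    finally show ?thesis .
  qed
  with assms(4,5) have "1 - \<mu> * (a * b) \<le> t" and "L * (a * b) - 1 \<le> t"
    by (metis abs_le_iff minus_diff_eq)+
  with assms(2,3) have "L * (1 - \<mu> * (a * b)) + \<mu> * (L * (a * b) - 1) \<le> L * t + \<mu> * t"
    by (intro add_mono mult_left_mono) auto
  with assms(2,3) show ?thesis
    by (simp add: divide_le_eq algebra_simps)
qed

lemma powr_inverse_le_if_le_power:
  fixes x \<rho> :: real
  assumes "0 \<le> x" and "x \<le> \<rho> ^ n" and "0 < \<rho>" and "0 < n"
  shows "x powr (1 / real n) \<le> \<rho>"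
proof -
  have "x powr (1 / real n) \<le> (\<rho> ^ n) powr (1 / real n)"
    using assms(1,2) by (intro powr_mono2) auto
  also have "\<dots> = \<rho>"
    using assms(3,4) by (simp add: powr_realpow [symmetric] powr_powr)
  finally show ?thesis .
qed

theorem theorem1:
  fixes \<mu> L \<rho> :: real and m d :: "real poly"
  assumes "0 < \<mu>" "\<mu> < L"
    and "lead_coeff m = 1" and "degree m \<ge> 1"
    and "\<forall>z \<in> croots m. cmod z = 1"
    and "degree d < degree m"
    and "0 < \<rho>" "\<rho> < 1"
    and "\<forall>lam \<in> {\<mu>..L}. \<forall>z \<in> croots (m - smult lam d). cmod z \<le> \<rho>"
  shows "\<rho> \<ge> ((L / \<mu> - 1) / (L / \<mu> + 1)) powr (1 / real (degree m))"
proof -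
  have bound: "\<bar>coeff m 0 - lam * coeff d 0\<bar> \<le> \<rho> ^ degree m" if "lam \<in> {\<mu>..L}" for lam
    using abs_coeff_0_le_power_degree[of "m - smult lam d" \<rho>] assms(9) that
      monic_minus_smult_lower_degree[OF assms(3,6), of lam] by simp
  have "(L - \<mu>) / (L + \<mu>) \<le> \<rho> ^ degree m"
    using affine_unit_at_zero_bound[OF abs_coeff_0_eq_1_if_roots_on_unit_circle[OF assms(3,5)]
        assms(1,2) bound bound] assms(1,2) by simp
  moreover have "(L / \<mu> - 1) / (L / \<mu> + 1) = (L - \<mu>) / (L + \<mu>)"
  proof -
    have "(L / \<mu> - 1) / (L / \<mu> + 1) = ((L - \<mu>) / \<mu>) / ((L + \<mu>) / \<mu>)"
      using assms(1) by (simp add: diff_divide_distrib add_divide_distrib)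
    with assms(1) show ?thesis
      by simp
  qed
  ultimately show ?thesis
    using powr_inverse_le_if_le_power[of "(L - \<mu>) / (L + \<mu>)"] assms(1,2,4,7) by simp
qed

end
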